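(* Let $\xi=\eta x.\chi$ be a tidy fixpoint formula with $x\in\mathrm{FV}(\chi)$ and $\xi\notin\mathrm{Clos}(\chi)$, and let $\chi'=\chi[x'/x]$ for a fresh variable $x'$. Then $\chi'$ is tidy, and: (1) the map $\phi\mapsto\phi[\xi/x']$ is a bijection from $\mathrm{Clos}(\chi')$ onto $\mathrm{Clos}(\xi)$. For all $\phi,\psi\in\mathrm{Clos}(\chi')$: (2) if $\phi\neq x'$ then ($\phi\rightarrow_C\psi$ iff $\phi[\xi/x']\rightarrow_C\psi[\xi/x']$), and $L_n(\phi)=L_n(\phi[\xi/x'])$; (3) if $x'\in\mathrm{FV}(\phi)$ then ($\phi\trianglelefteq_f\psi$ iff $\phi[\xi/x']\trianglelefteq_f\psi[\xi/x']$); (4) if $\phi,\psi$ are fixpoint formulas then ($\psi\sqsubseteq_C\phi$ iff $\psi[\xi/x']\sqsubseteq_C\phi[\xi/x']$); (5) if $\phi$ is a fixpoint formula then $h^\downarrow(\phi)=h^\downarrow(\phi[\xi/x'])$; (6) if $(\phi_n)_{n\in\omega}$ is an infinite trace through $\mathrm{Clos}(\chi')$, then $(\phi_n)_{n\in\omega}$ and $(\phi_n[\xi/x'])_{n\in\omega}$ have the same winner.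
   Context: Syntax. Formulas of the modal $\mu$-calculus are taken in negation normal form: $\phi ::= \top \mid \bot \mid p \mid \neg p \mid x \mid \phi\land\phi\mid\phi\lor\phi\mid\Diamond\phi\mid\Box\phi\mid\mu x.\phi\mid\nu x.\phi$, where $p$ ranges over proposition letters and $x$ over an infinite supply of variables (which occur only positively). The formulas $\top,\bot,p,\neg p,x$ are atomic. $\mathrm{FV}(\phi)$ and $\mathrm{BV}(\phi)$ are the sets of free and bound variables of $\phi$; $\phi$ is tidy if $\mathrm{FV}(\phi)\cap\mathrm{BV}(\phi)=\varnothing$. A fixpoint formula is one of the form $\eta x.\chi$ with $\eta\in\{\mu,\nu\}$; it has type $\eta$, where $\mu$ counts as odd and $\nu$ as even parity, and $\bar\eta$ denotes the other operator. $\chi[\xi/x]$ is the result of replacing every free occurrence of $x$ in $\chi$ by $\xi$; $\xi$ is free for $x$ in $\chi$ if no free variable of $\xi$ becomes bound in $\chi[\xi/x]$. A variable is fresh if it occurs in none of the formulas under consideration. Traces and closure. The trace relation $\rightarrow_C$: $\phi_0\odot\phi_1\rightarrow_C\phi_i$ for $\odot\in\{\land,\lor\}$, $i\in\{0,1\}$; $\heartsuit\phi\rightarrow_C\phi$ for $\heartsuit\in\{\Diamond,\Box\}$; $\eta x.\phi\rightarrow_C\phi[\eta x.\phi/x]$; atomic formulas have no successors. $\twoheadrightarrow_C$ is the reflexive transitive closure of $\rightarrow_C$, $\mathrm{Clos}(\phi)=\{\psi\mid\phi\twoheadrightarrow_C\psi\}$ (a finite set), and a trace is a finite or infinite sequence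 of formulas with consecutive members related by $\rightarrow_C$. Write $\phi\equiv_C\psi$ iff $\phi\twoheadrightarrow_C\psi$ and $\psi\twoheadrightarrow_C\phi$; its equivalence classes are (closure) clusters, and $C(\phi)$ is the cluster of $\phi$. Natural labelling: $L_n(\phi)=\phi$ for atomic $\phi$, $L_n(\heartsuit\psi)=\heartsuit$, $L_n(\psi_0\odot\psi_1)=\odot$, $L_n(\eta x.\psi)=\epsilon$. Free subformulas. $\phi\trianglelefteq_f\psi$ iff $\psi=\chi[\phi/y]$ for some formula $\chi$ and variable $y$ with $y\in\mathrm{FV}(\chi)$ and $\phi$ free for $y$ in $\chi$. Closure order. For a formula $\psi$, write $\rho\twoheadrightarrow_C^{\psi}\sigma$ iff there is a trace $\rho=\chi_0\rightarrow_C\cdots\rightarrow_C\chi_n=\sigma$ ($n\ge0$) with $\psi\trianglelefteq_f\chi_i$ for all $i\le n$. For fixpoint formulas $\phi,\psi$: $\phi\sqsubseteq_C\psi$ iff $\psi\twoheadrightarrow_C^{\psi}\phi$; $\phi\sqsubset_C\psi$ iff $\phi\sqsubseteq_C\psi$ and $\psi\not\sqsubseteq_C\phi$. Chains. An alternating $\sqsubset_C$-chain of length $n$ is a sequence $\eta_1x_1.\chi_1,\dots,\eta_nx_n.\chi_n$ of tidy fixpoint formulas with $\eta_ix_i.\chi_i\sqsubset_C\eta_{i+1}x_{i+1}.\chi_{i+1}$ and $\eta_{i+1}=\bar\eta_i$ for all $i<n$; it starts at the first and leads up to the last formula. For a tidy fixpoint formula $\xi$, $h^\uparrow(\xi)$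 (resp. $h^\downarrow(\xi)$) is the maximal length of an alternating $\sqsubset_C$-chain starting at (resp. leading up to) $\xi$. For a cluster $C$, $\mathit{cd}(C)$ is the maximal length of an alternating $\sqsubset_C$-chain inside $C$. Global priority map. For a tidy fixpoint formula $\psi=\eta y.\phi$ let $d=\mathit{cd}(C(\psi))-h^\uparrow(\psi)$ and set $\Omega_g(\psi)=d$ if $d$ has parity $\eta$ and $\Omega_g(\psi)=d+1$ otherwise; $\Omega_g$ is undefined on non-fixpoint formulas. The winner of an infinite trace of tidy formulas is $\exists$ if the largest value of $\Omega_g$ among the fixpoint formulas occurring infinitely often on it is even, and $\forall$ otherwise. *)

theory Defs
  imports Main
begin

datatype fp = Mu | Nu

datatype 'p fml =
    Top
  | Bot
  | Prop 'p
  | NProp 'p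
  | Var nat
  | And "'p fml" "'p fml"
  | Or "'p fml" "'p fml"
  | Dia "'p fml"
  | Box "'p fml"
  | Fix fp nat "'p fml"

fun dual :: "fp \<Rightarrow> fp" where
  "dual Mu = Nu" | "dual Nu = Mu"

fun FV :: "'p fml \<Rightarrow> nat set" where
  "FV (Var x) = {x}"
| "FV (And a b) = FV a \<union> FV b"
| "FV (Or a b) = FV a \<union> FV b"
| "FV (Dia a) = FV a"
| "FV (Box a) = FV a"
| "FV (Fix e y a) = FV a - {y}"
| "FV _ = {}"

fun BV :: "'p fml \<Rightarrow> nat set" where
  "BV (And a b) = BV a \<union> BV b"
| "BV (Or a b) = BV a \<union> BV b"
| "BV (Dia a) = BV a"
| "BV (Box a) = BV a"
| "BV (Fix e y a) = insert y (BV a)"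
| "BV _ = {}"

definition vars :: "'p fml \<Rightarrow> nat set" where
  "vars a = FV a \<union> BV a"

definition tidy :: "'p fml \<Rightarrow> bool" where
  "tidy a \<longleftrightarrow> FV a \<inter> BV a = {}"

fun is_fix :: "'p fml \<Rightarrow> bool" where
  "is_fix (Fix e y a) = True"
| "is_fix _ = False"

fun fix_type :: "'p fml \<Rightarrow> fp" where
  "fix_type (Fix e y a) = e"
| "fix_type _ = Mu"   \<comment> \<open>irrelevant default, only used on fixpoint formulas\<close>

text \<open>\<open>subst c t x\<close> is \<open>c[t/x]\<close>: replace every free occurrence of x in c by t
(plain replacement, no renaming of bound variables).\<close>
fun subst :: "'p fml \<Rightarrow> 'p fml \<Rightarrow> nat \<Rightarrow> 'p fml" where
  "subst (Var y) t x = (if y = x then t else Var y)"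
| "subst (And a b) t x = And (subst a t x) (subst b t x)"
| "subst (Or a b) t x = Or (subst a t x) (subst b t x)"
| "subst (Dia a) t x = Dia (subst a t x)"
| "subst (Box a) t x = Box (subst a t x)"
| "subst (Fix e y a) t x = (if y = x then Fix e y a else Fix e y (subst a t x))"
| "subst a t x = a"

text \<open>\<open>free_for t x c\<close>: t is free for x in c, i.e. no free variable of t becomes bound
in \<open>c[t/x]\<close>.\<close>
fun free_for :: "'p fml \<Rightarrow> nat \<Rightarrow> 'p fml \<Rightarrow> bool" where
  "free_for t x (And a b) = (free_for t x a \<and> free_for t x b)"
| "free_for t x (Or a b) = (free_for t x a \<and> free_for t x b)"
| "free_for t x (Dia a) = free_for t x a"
| "free_for t x (Box a) = free_for t x a"
| "free_for t x (Fix e y a) =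
     (y = x \<or> ((x \<notin> FV a \<or> y \<notin> FV t) \<and> free_for t x a))"
| "free_for t x _ = True"

inductive step :: "'p fml \<Rightarrow> 'p fml \<Rightarrow> bool" where
  "step (And a b) a"
| "step (And a b) b"
| "step (Or a b) a"
| "step (Or a b) b"
| "step (Dia a) a"
| "step (Box a) a"
| "step (Fix e x a) (subst a (Fix e x a) x)"

definition Clos :: "'p fml \<Rightarrow> 'p fml set" where
  "Clos a = {b. step\<^sup>*\<^sup>* a b}"

definition clos_eq :: "'p fml \<Rightarrow> 'p fml \<Rightarrow> bool" where
  "clos_eq a b \<longleftrightarrow> step\<^sup>*\<^sup>* a b \<and> step\<^sup>*\<^sup>* b a"

definition cluster :: "'p fml \<Rightarrow> 'p fml set" where
  "cluster a = {b. clos_eq a b}"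

definition inf_trace :: "(nat \<Rightarrow> 'p fml) \<Rightarrow> bool" where
  "inf_trace f \<longleftrightarrow> (\<forall>n. step (f n) (f (Suc n)))"

datatype 'p label = LAtom "'p fml" | LAnd | LOr | LDia | LBox | LEps

fun Ln :: "'p fml \<Rightarrow> 'p label" where
  "Ln (And a b) = LAnd"
| "Ln (Or a b) = LOr"
| "Ln (Dia a) = LDia"
| "Ln (Box a) = LBox"
| "Ln (Fix e x a) = LEps"
| "Ln a = LAtom a"

definition fsub :: "'p fml \<Rightarrow> 'p fml \<Rightarrow> bool" where
  "fsub a b \<longleftrightarrow> (\<exists>c y. b = subst c a y \<and> y \<in> FV c \<and> free_for a y c)"

definition trace_within :: "'p fml \<Rightarrow> 'p fml \<Rightarrow> 'p fml \<Rightarrow> bool" where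
  "trace_within p r s \<longleftrightarrow> fsub p r \<and> (\<lambda>a b. step a b \<and> fsub p b)\<^sup>*\<^sup>* r s"

definition sqle :: "'p fml \<Rightarrow> 'p fml \<Rightarrow> bool" where
  "sqle a b \<longleftrightarrow> is_fix a \<and> is_fix b \<and> trace_within b b a"

definition sqlt :: "'p fml \<Rightarrow> 'p fml \<Rightarrow> bool" where
  "sqlt a b \<longleftrightarrow> sqle a b \<and> \<not> sqle b a"

definition alt_chain :: "'p fml list \<Rightarrow> bool" where
  "alt_chain cs \<longleftrightarrow>
     (\<forall>c \<in> set cs. tidy c \<and> is_fix c) \<and>
     (\<forall>i. Suc i < length cs \<longrightarrow>
        sqlt (cs ! i) (cs ! Suc i) \<and> fix_type (cs ! Suc i) = dual (fix_type (cs ! i)))"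

definition h_up :: "'p fml \<Rightarrow> nat" where
  "h_up a = Max {length cs | cs. alt_chain cs \<and> cs \<noteq> [] \<and> hd cs = a}"

definition h_down :: "'p fml \<Rightarrow> nat" where
  "h_down a = Max {length cs | cs. alt_chain cs \<and> cs \<noteq> [] \<and> last cs = a}"

definition cd :: "'p fml set \<Rightarrow> nat" where
  "cd C = Max {length cs | cs. alt_chain cs \<and> set cs \<subseteq> C}"

text \<open>Only meaningful on tidy fixpoint formulas. mu counts as odd, nu as even.\<close>
definition Omega_g :: "'p fml \<Rightarrow> int" where
  "Omega_g a =
     (let d = int (cd (cluster a)) - int (h_up a)
      in if (odd d \<longleftrightarrow> fix_type a = Mu) then d else d + 1)"

datatype player = Eloise | Abelard

definition winner :: "(nat \<Rightarrow> 'p fml) \<Rightarrow> player" where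
  "winner f =
     (if even (Max (Omega_g ` {a. is_fix a \<and> (\<exists>\<^sub>\<infinity>n. f n = a)})) then Eloise else Abelard)"

end

theory Submission
  imports Defs "HOL-Library.Infinite_Set"
begin

text \<open>Unfolding \<open>\<xi> = \<eta>x.\<chi>\<close> once gives \<open>\<chi>[\<xi>/x] = \<chi>'[\<xi>/x']\<close>, so \<open>Clos \<xi>\<close> is \<open>\<xi>\<close> together
  with the image of \<open>Clos \<chi>'\<close> under \<open>\<sigma> = [\<xi>/x']\<close>, and \<open>\<sigma>\<close> sends \<open>x'\<close> to \<open>\<xi>\<close>. Because \<open>x'\<close>
  is fresh and \<open>\<xi>\<close> does not occur in \<open>Clos \<chi>\<close>, hence not in \<open>Clos \<chi>'\<close>, the map \<open>\<sigma>\<close> is injective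
  on \<open>Clos \<chi>'\<close>, commutes with the trace relation away from \<open>x'\<close>, and preserves and reflects
  free occurrences of formulas containing \<open>x'\<close>. Hence it preserves and reflects
  \<open>\<sqsubseteq>\<^sub>C\<close>, maps the alternating chains leading up to \<open>\<phi>\<close> bijectively onto those leading up
  to \<open>\<sigma>\<phi>\<close>, and maps the recurrent fixpoint formulas of a trace onto those of its image.
  The winner of a trace is the parity of the type of its \<open>\<sqsubseteq>\<^sub>C\<close>-greatest recurrent fixpoint
  formula, since all recurrent formulas lie in one cluster, where \<open>\<Omega>\<^sub>g\<close> is monotone for
  \<open>\<sqsubseteq>\<^sub>C\<close>; \<open>\<sigma>\<close> preserves this formula and its type.\<close>

section \<open>Substitution and the trace relation\<close>

lemma subst_nonfree: "x \<notin> FV a \<Longrightarrow> subst a t x = a"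
  by (induction a) auto

lemma FV_subst: "FV (subst a t x) \<subseteq> FV a - {x} \<union> FV t"
  by (induction a) auto

lemma FV_subst_lower: "FV a - {x} \<subseteq> FV (subst a t x)"
  by (induction a) auto

lemma FV_subst_free: "x \<in> FV a \<Longrightarrow> BV a \<inter> FV t = {} \<Longrightarrow> FV t \<subseteq> FV (subst a t x)"
  by (induction a) auto

lemma BV_subst: "BV (subst a t x) \<subseteq> BV a \<union> BV t"
  by (induction a) auto

lemma BV_subst_Var [simp]: "BV (subst a (Var z) x) = BV a"
  by (induction a) auto

lemma size_subst_Var [simp]: "size (subst a (Var z) x) = size a"
  by (induction a) auto

lemma finite_vars: "finite (vars a)"
proof -
  have "finite (FV a)" "finite (BV a)" by (induction a) auto
  then show ?thesis by (simp add: vars_def)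
qed

lemma subst_subst:
  "z \<noteq> x \<Longrightarrow> z \<notin> FV s \<Longrightarrow> x \<notin> BV a \<Longrightarrow>
   subst (subst a t z) s x = subst (subst a s x) (subst t s x) z"
  by (induction a) (auto simp: subst_nonfree)

lemma subst_rename:
  "x' \<notin> vars a \<Longrightarrow> x \<noteq> x' \<Longrightarrow> subst (subst a (Var x') x) t x' = subst a t x"
  by (induction a) (auto simp: subst_nonfree vars_def)

lemma subst_non_Var:
  "a \<noteq> Var x \<Longrightarrow> Ln (subst a t x) = Ln a"
  "a \<noteq> Var x \<Longrightarrow> is_fix (subst a t x) \<longleftrightarrow> is_fix a"
  "is_fix a \<Longrightarrow> fix_type (subst a t x) = fix_type a"
  by (cases a; simp)+

lemma step_simps [simp]:
  "\<not> step Top u" "\<not> step Bot u" "\<not> step (Prop p) u" "\<not> step (NProp p) u" "\<not> step (Var z) u"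
  "step (And a b) u \<longleftrightarrow> u = a \<or> u = b"
  "step (Or a b) u \<longleftrightarrow> u = a \<or> u = b"
  "step (Dia a) u \<longleftrightarrow> u = a"
  "step (Box a) u \<longleftrightarrow> u = a"
  "step (Fix e x a) u \<longleftrightarrow> u = subst a (Fix e x a) x"
  by (auto elim: step.cases intro: step.intros)

lemma step_FV: "step a b \<Longrightarrow> FV b \<subseteq> FV a"
  by (induction rule: step.induct) (use FV_subst in fastforce)+

lemma step_BV: "step a b \<Longrightarrow> BV b \<subseteq> BV a"
  by (induction rule: step.induct) (use BV_subst in fastforce)+

lemma Clos_refl: "a \<in> Clos a"
  by (simp add: Clos_def)

lemma Clos_step: "step a b \<Longrightarrow> b \<in> Clos a"
  by (simp add: Clos_def)

lemma Clos_trans: "b \<in> Clos a \<Longrightarrow> c \<in> Clos b \<Longrightarrow> c \<in> Clos a"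
  by (auto simp: Clos_def)

lemma Clos_stepI: "step a b \<Longrightarrow> c \<in> Clos b \<Longrightarrow> c \<in> Clos a"
  by (auto simp: Clos_def)

lemma Clos_step_trans: "b \<in> Clos a \<Longrightarrow> step b c \<Longrightarrow> c \<in> Clos a"
  by (auto simp: Clos_def)

lemma Clos_FV: "b \<in> Clos a \<Longrightarrow> FV b \<subseteq> FV a"
  unfolding Clos_def mem_Collect_eq by (induction rule: rtranclp_induct) (auto dest: step_FV)

lemma Clos_BV: "b \<in> Clos a \<Longrightarrow> BV b \<subseteq> BV a"
  unfolding Clos_def mem_Collect_eq by (induction rule: rtranclp_induct) (auto dest: step_BV)

lemma tidy_Clos: "tidy a \<Longrightarrow> b \<in> Clos a \<Longrightarrow> tidy b"
  using Clos_FV Clos_BV unfolding tidy_def by blast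

section \<open>Renaming the variable of a fixpoint formula\<close>

text \<open>\<open>subst_xi\<close> is the map \<open>\<phi> \<mapsto> \<phi>[\<xi>/x']\<close>; it commutes with unfolding the fixpoint
  formulas of \<open>t\<close> whenever \<open>capture_free t\<close>.\<close>
locale fresh_renaming =
  fixes e :: fp and x :: nat and chi :: "'p fml" and x' :: nat
  assumes tidy_xi: "tidy (Fix e x chi)"
    and fresh: "x' \<notin> vars (Fix e x chi)"
begin

abbreviation xi :: "'p fml" where "xi \<equiv> Fix e x chi"
abbreviation chi' :: "'p fml" where "chi' \<equiv> subst chi (Var x') x"
abbreviation subst_xi :: "'p fml \<Rightarrow> 'p fml" where "subst_xi t \<equiv> subst t xi x'"

definition capture_free :: "'p fml \<Rightarrow> bool" where
  "capture_free t \<longleftrightarrow> x' \<notin> BV t \<and> BV t \<inter> FV xi = {}"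

lemma capture_free_simps [simp]:
  "capture_free (And a b) \<longleftrightarrow> capture_free a \<and> capture_free b"
  "capture_free (Or a b) \<longleftrightarrow> capture_free a \<and> capture_free b"
  "capture_free (Dia a) \<longleftrightarrow> capture_free a"
  "capture_free (Box a) \<longleftrightarrow> capture_free a"
  "capture_free (Fix e2 z a) \<longleftrightarrow> capture_free a \<and> z \<noteq> x' \<and> z \<notin> FV xi"
  by (auto simp: capture_free_def)

lemma fresh_var: "x \<noteq> x'" "x' \<notin> FV chi" "x' \<notin> BV chi" "x' \<notin> FV xi" "x' \<notin> BV xi"
  using fresh by (auto simp: vars_def)

lemma tidy_chi': "tidy chi'"
  using tidy_xi fresh_var FV_subst[of chi "Var x'" x] unfolding tidy_def by auto

lemma subst_xi_chi': "subst_xi chi' = subst chi xi x"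
  using subst_rename[of x' chi x xi] fresh_var by (simp add: vars_def)

lemma Clos_chi'_capture_free: "t \<in> Clos chi' \<Longrightarrow> capture_free t"
  using Clos_BV[of t chi'] tidy_xi fresh_var unfolding capture_free_def tidy_def by auto

lemma subst_xi_step_commute:
  assumes "capture_free (Fix e2 z a)"
  shows "subst_xi (subst a (Fix e2 z a) z) = subst (subst_xi a) (subst_xi (Fix e2 z a)) z"
proof -
  have "z \<noteq> x'" "z \<notin> FV xi" "x' \<notin> BV a" using assms by (auto simp: capture_free_def)
  then show ?thesis by (rule subst_subst)
qed

lemma step_subst_xi: "capture_free t \<Longrightarrow> step t u \<Longrightarrow> step (subst_xi t) (subst_xi u)"
  by (cases t) (auto simp: subst_xi_step_commute)

lemma step_subst_xi_inv:
  "t \<noteq> Var x' \<Longrightarrow> capture_free t \<Longrightarrow> step (subst_xi t) u \<Longrightarrow> \<exists>v. step t v \<and> u = subst_xi v"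
  by (cases t) (auto simp: subst_xi_step_commute split: if_splits)

lemma subst_xi_Clos: "t \<in> Clos chi' \<Longrightarrow> subst_xi t \<in> Clos xi"
  unfolding Clos_def mem_Collect_eq
proof (induction rule: rtranclp_induct)
  case base
  have "step xi (subst_xi chi')" by (simp add: subst_xi_chi')
  then show ?case by (rule r_into_rtranclp)
next
  case (step t u)
  then have "capture_free t" using Clos_chi'_capture_free by (simp add: Clos_def)
  then show ?case using step step_subst_xi by (meson rtranclp.rtrancl_into_rtrancl)
qed

lemma Clos_xi_subset: "Clos xi \<subseteq> insert xi (subst_xi ` Clos chi')"
proof
  have unfolded_xi: "subst_xi chi' \<in> subst_xi ` Clos chi'" using Clos_refl by blast
  fix u assume "u \<in> Clos xi"
  then have "step\<^sup>*\<^sup>* xi u" by (simp add: Clos_def)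
  then show "u \<in> insert xi (subst_xi ` Clos chi')"
  proof (induction rule: rtranclp_induct)
    case (step u w)
    from step.IH show ?case
    proof
      assume "u = xi"
      with step.hyps(2) show ?thesis using unfolded_xi subst_xi_chi' by simp
    next
      assume "u \<in> subst_xi ` Clos chi'"
      then obtain t where t: "t \<in> Clos chi'" "u = subst_xi t" by blast
      show ?thesis
      proof (cases "t = Var x'")
        case True
        with step.hyps(2) t show ?thesis using unfolded_xi subst_xi_chi' by simp
      next
        case False
        with t step.hyps(2) obtain v where "step t v" "w = subst_xi v"
          using step_subst_xi_inv Clos_chi'_capture_free by blast
        with t(1) show ?thesis using Clos_step_trans by blast
      qed
    qed
  qed simp
qed

end

lemma Clos_unfold: "Clos a = insert a (\<Union>{Clos b | b. step a b})"
proof (intro equalityI subsetI)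
  fix c assume "c \<in> Clos a"
  then have "step\<^sup>*\<^sup>* a c" by (simp add: Clos_def)
  then show "c \<in> insert a (\<Union>{Clos b | b. step a b})"
    by (cases rule: converse_rtranclpE) (auto simp: Clos_def)
qed (auto simp: Clos_def intro: converse_rtranclp_into_rtranclp)

lemma finite_Clos: "tidy a \<Longrightarrow> finite (Clos a)"
proof (induction "size a" arbitrary: a rule: less_induct)
  case less
  show ?case
  proof (cases "is_fix a")
    case True
    then obtain e x chi where a: "a = Fix e x chi" by (cases a) auto
    obtain x' where "x' \<notin> vars a"
      using finite_vars ex_new_if_finite[OF infinite_UNIV_nat] by blast
    then interpret fresh_renaming e x chi x'
      using less.prems a by unfold_locales auto
    have "finite (Clos chi')" using less tidy_chi' a by auto
    then show ?thesis using Clos_xi_subset a finite_subset by blast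
  next
    case False
    then have "finite {b. step a b}" "\<And>b. step a b \<Longrightarrow> size b < size a"
      by (cases a; auto)+
    moreover have "\<And>b. step a b \<Longrightarrow> tidy b" using less.prems tidy_Clos Clos_step by blast
    ultimately show ?thesis using less.hyps by (subst Clos_unfold) auto
  qed
qed

section \<open>Free subformulas\<close>

text \<open>\<open>occ_at a b n\<close>: \<open>a\<close> occurs in \<open>b\<close> at depth \<open>n\<close> without any of its free variables
  being bound on the way; \<open>occ\<close> is the free-subformula relation (\<open>fsub_iff_occ\<close>).\<close>
inductive occ_at :: "'p fml \<Rightarrow> 'p fml \<Rightarrow> nat \<Rightarrow> bool" where
  refl: "occ_at a a 0"
| and1: "occ_at a b n \<Longrightarrow> occ_at a (And b c) (Suc n)"
| and2: "occ_at a c n \<Longrightarrow> occ_at a (And b c) (Suc n)"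
| or1: "occ_at a b n \<Longrightarrow> occ_at a (Or b c) (Suc n)"
| or2: "occ_at a c n \<Longrightarrow> occ_at a (Or b c) (Suc n)"
| dia: "occ_at a b n \<Longrightarrow> occ_at a (Dia b) (Suc n)"
| box: "occ_at a b n \<Longrightarrow> occ_at a (Box b) (Suc n)"
| fixp: "occ_at a b n \<Longrightarrow> y \<notin> FV a \<Longrightarrow> occ_at a (Fix e y b) (Suc n)"

definition occ :: "'p fml \<Rightarrow> 'p fml \<Rightarrow> bool" where
  "occ a b \<longleftrightarrow> (\<exists>n. occ_at a b n)"

lemma occ_simps [simp]:
  "occ a Top \<longleftrightarrow> a = Top" "occ a Bot \<longleftrightarrow> a = Bot"
  "occ a (Prop p) \<longleftrightarrow> a = Prop p" "occ a (NProp p) \<longleftrightarrow> a = NProp p"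
  "occ a (Var z) \<longleftrightarrow> a = Var z"
  "occ a (And b c) \<longleftrightarrow> a = And b c \<or> occ a b \<or> occ a c"
  "occ a (Or b c) \<longleftrightarrow> a = Or b c \<or> occ a b \<or> occ a c"
  "occ a (Dia b) \<longleftrightarrow> a = Dia b \<or> occ a b"
  "occ a (Box b) \<longleftrightarrow> a = Box b \<or> occ a b"
  "occ a (Fix e y b) \<longleftrightarrow> a = Fix e y b \<or> occ a b \<and> y \<notin> FV a"
  unfolding occ_def by (auto intro: occ_at.intros elim: occ_at.cases)

lemma occ_refl [simp]: "occ a a"
  by (cases a) auto

lemma occ_size: "occ a b \<Longrightarrow> size a \<le> size b"
  by (induction b) auto

lemma occ_FV: "occ a b \<Longrightarrow> FV a \<subseteq> FV b"
  by (induction b) auto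

lemma occ_size_eq: "occ a b \<Longrightarrow> size a = size b \<Longrightarrow> a = b"
  by (induction b) (auto dest: occ_size)

lemma occ_antisym: "occ a b \<Longrightarrow> occ b a \<Longrightarrow> a = b"
  using occ_size occ_size_eq by (metis le_antisym)

lemma occ_trans: "occ a b \<Longrightarrow> occ b c \<Longrightarrow> occ a c"
  by (induction c) (auto dest: occ_FV)

lemma finite_occ: "finite {a. occ a b}"
proof (induction b)
  case (And b c)
  have "{a. occ a (And b c)} = insert (And b c) ({a. occ a b} \<union> {a. occ a c})" by auto
  with And show ?case by simp
next
  case (Or b c)
  have "{a. occ a (Or b c)} = insert (Or b c) ({a. occ a b} \<union> {a. occ a c})" by auto
  with Or show ?case by simp
next
  case (Fix e y b)
  have "{a. occ a (Fix e y b)} \<subseteq> insert (Fix e y b) {a. occ a b}" by auto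
  with Fix show ?case using finite_subset by blast
qed auto

lemma occ_at_subst: "occ_at a b n \<Longrightarrow> z \<notin> FV a \<Longrightarrow> occ_at a (subst b t z) n"
  by (induction rule: occ_at.induct) (auto intro: occ_at.intros simp: subst_nonfree)

text \<open>Unfolding a fixpoint keeps the depth of an occurrence inside its body, so the
  induction runs over that depth.\<close>
lemma occ_at_Clos: "occ_at a b n \<Longrightarrow> a \<in> Clos b"
proof (induction n arbitrary: b rule: less_induct)
  case (less n)
  have IH: "a \<in> Clos b" if "step b b'" "occ_at a b' m" "m < n" for b' m
    using less.IH that Clos_stepI by blast
  from less.prems show ?case
  proof cases
    case (fixp b' m y e)
    then show ?thesis using IH[of "subst b' b y" m] occ_at_subst[of a b' m y b] by simp
  qed (simp add: Clos_refl | metis IH lessI step.intros)+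
qed

lemma occ_Clos: "occ a b \<Longrightarrow> a \<in> Clos b"
  unfolding occ_def using occ_at_Clos by blast

lemma occ_Var_FV: "z \<in> FV a \<Longrightarrow> occ (Var z) a"
  by (induction a) auto

lemma occ_subst_self: "z \<in> FV d \<Longrightarrow> BV d \<inter> FV t = {} \<Longrightarrow> occ t (subst d t z)"
  by (induction d) auto

lemma occ_subst_cases:
  "BV d \<inter> FV t = {} \<Longrightarrow> occ a (subst d t z) \<Longrightarrow> occ a t \<or> occ a d \<or> occ t a"
proof (induction d)
  case (Fix e w d)
  then show ?case
    using occ_subst_self[of z "Fix e w d" t] subst_nonfree[of z "Fix e w d" t]
    by (cases "z \<in> FV (Fix e w d)") (auto split: if_splits)
qed (use occ_subst_self subst_nonfree in \<open>fastforce split: if_splits\<close>)+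

lemma free_for_nonfree: "y \<notin> FV d \<Longrightarrow> free_for a y d"
  by (induction d) auto

lemma occ_subst_free_for: "y \<in> FV c \<Longrightarrow> free_for a y c \<Longrightarrow> occ a (subst c a y)"
  by (induction c) auto

lemma occ_at_context:
  "occ_at a b n \<Longrightarrow> y \<notin> vars b \<Longrightarrow> \<exists>c. b = subst c a y \<and> y \<in> FV c \<and> free_for a y c"
proof (induction rule: occ_at.induct)
  case (refl a)
  show ?case by (intro exI[of _ "Var y"]) simp
next
  case (and1 a b n c)
  then obtain d where "b = subst d a y" "y \<in> FV d" "free_for a y d" by (auto simp: vars_def)
  with and1.prems show ?case
    by (intro exI[of _ "And d c"]) (auto simp: vars_def subst_nonfree free_for_nonfree)
next
  case (and2 a c n b)
  then obtain d where "c = subst d a y" "y \<in> FV d" "free_for a y d" by (auto simp: vars_def)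
  with and2.prems show ?case
    by (intro exI[of _ "And b d"]) (auto simp: vars_def subst_nonfree free_for_nonfree)
next
  case (or1 a b n c)
  then obtain d where "b = subst d a y" "y \<in> FV d" "free_for a y d" by (auto simp: vars_def)
  with or1.prems show ?case
    by (intro exI[of _ "Or d c"]) (auto simp: vars_def subst_nonfree free_for_nonfree)
next
  case (or2 a c n b)
  then obtain d where "c = subst d a y" "y \<in> FV d" "free_for a y d" by (auto simp: vars_def)
  with or2.prems show ?case
    by (intro exI[of _ "Or b d"]) (auto simp: vars_def subst_nonfree free_for_nonfree)
next
  case (dia a b n)
  then obtain d where "b = subst d a y" "y \<in> FV d" "free_for a y d" by (auto simp: vars_def)
  then show ?case by (intro exI[of _ "Dia d"]) auto
next
  case (box a b n)
  then obtain d where "b = subst d a y" "y \<in> FV d" "free_for a y d" by (auto simp: vars_def)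
  then show ?case by (intro exI[of _ "Box d"]) auto
next
  case (fixp a b n w e)
  then obtain d where "b = subst d a y" "y \<in> FV d" "free_for a y d" by (auto simp: vars_def)
  with fixp show ?case by (intro exI[of _ "Fix e w d"]) (auto simp: vars_def)
qed

lemma fsub_iff_occ: "fsub a b \<longleftrightarrow> occ a b"
proof
  assume "occ a b"
  moreover obtain y where "y \<notin> vars b"
    using finite_vars ex_new_if_finite[OF infinite_UNIV_nat] by blast
  ultimately show "fsub a b"
    unfolding fsub_def occ_def using occ_at_context by blast
qed (auto simp: fsub_def occ_subst_free_for)

section \<open>The closure order and alternating chains\<close>

abbreviation step_within :: "'p fml \<Rightarrow> 'p fml \<Rightarrow> 'p fml \<Rightarrow> bool" where
  "step_within p u v \<equiv> step u v \<and> fsub p v"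

lemma step_within_Clos: "(step_within p)\<^sup>*\<^sup>* a b \<Longrightarrow> b \<in> Clos a"
  unfolding Clos_def by (induction rule: rtranclp_induct) auto

lemma step_within_last: "(step_within p)\<^sup>*\<^sup>* a b \<Longrightarrow> b = a \<or> occ p b"
  by (induction rule: rtranclp_induct) (auto simp: fsub_iff_occ)

lemma step_within_mono: "(step_within p)\<^sup>*\<^sup>* a b \<Longrightarrow> occ q p \<Longrightarrow> (step_within q)\<^sup>*\<^sup>* a b"
  by (induction rule: rtranclp_induct)
    (auto simp: fsub_iff_occ intro: occ_trans rtranclp.rtrancl_into_rtrancl)

lemma sqle_iff_step_within: "sqle a b \<longleftrightarrow> is_fix a \<and> is_fix b \<and> (step_within b)\<^sup>*\<^sup>* b a"
  by (simp add: sqle_def trace_within_def fsub_iff_occ)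

lemma sqle_occ: "sqle a b \<Longrightarrow> occ b a"
  using step_within_last unfolding sqle_iff_step_within by fastforce

lemma sqle_Clos: "sqle a b \<Longrightarrow> a \<in> Clos b"
  using step_within_Clos unfolding sqle_iff_step_within by blast

lemma sqle_refl: "is_fix a \<Longrightarrow> sqle a a"
  by (simp add: sqle_iff_step_within)

lemma sqle_trans:
  assumes "sqle a b" and "sqle b c"
  shows "sqle a c"
proof -
  have "(step_within c)\<^sup>*\<^sup>* b a"
    using assms step_within_mono sqle_occ unfolding sqle_iff_step_within by blast
  with assms show ?thesis
    unfolding sqle_iff_step_within by (meson rtranclp_trans)
qed

lemma sqle_antisym: "sqle a b \<Longrightarrow> sqle b a \<Longrightarrow> a = b"
  using sqle_occ occ_antisym by blast

lemma sqlt_trans: "sqlt a b \<Longrightarrow> sqlt b c \<Longrightarrow> sqlt a c"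
  unfolding sqlt_def using sqle_trans by blast

lemma alt_chain_Nil [simp]: "alt_chain []"
  by (simp add: alt_chain_def)

lemma alt_chain_Cons:
  "alt_chain (c # cs) \<longleftrightarrow> tidy c \<and> is_fix c \<and> alt_chain cs \<and>
     (cs \<noteq> [] \<longrightarrow> sqlt c (hd cs) \<and> fix_type (hd cs) = dual (fix_type c))"
proof -
  have "(\<forall>i. Suc i < length (c # cs) \<longrightarrow> P ((c # cs) ! i) ((c # cs) ! Suc i)) \<longleftrightarrow>
    (cs \<noteq> [] \<longrightarrow> P c (hd cs)) \<and> (\<forall>i. Suc i < length cs \<longrightarrow> P (cs ! i) (cs ! Suc i))" for P
  proof (cases cs)
    case (Cons d ds)
    have "(\<forall>i. Suc i < length (c # cs) \<longrightarrow> Q i) \<longleftrightarrow> (\<forall>i < Suc (length ds). Q i)"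
      and "(\<forall>i. Suc i < length cs \<longrightarrow> Q' i) \<longleftrightarrow> (\<forall>i < length ds. Q' i)" for Q Q'
      using Cons by auto
    then show ?thesis using Cons by (simp only: All_less_Suc2) simp
  qed simp
  from this[of "\<lambda>a b. sqlt a b \<and> fix_type b = dual (fix_type a)"] show ?thesis
    unfolding alt_chain_def by auto
qed

lemma alt_chain_hd_sqle: "alt_chain cs \<Longrightarrow> c \<in> set cs \<Longrightarrow> sqle (hd cs) c"
  by (induction cs arbitrary: c)
    (auto simp: alt_chain_Cons sqlt_def sqle_refl intro: sqle_trans split: if_splits)

lemma alt_chain_distinct: "alt_chain cs \<Longrightarrow> distinct cs"
  by (induction cs) (auto simp: alt_chain_Cons sqlt_def dest: alt_chain_hd_sqle)

lemma alt_chain_sqle_last: "alt_chain cs \<Longrightarrow> c \<in> set cs \<Longrightarrow> sqle c (last cs)"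
proof (induction cs arbitrary: c)
  case (Cons d cs)
  show ?case
  proof (cases "cs = []")
    case False
    then have "sqle (hd cs) (last cs)" "sqle d (hd cs)"
      using Cons by (auto simp: alt_chain_Cons sqlt_def)
    then have "sqle d (last cs)" by (rule sqle_trans[rotated])
    then show ?thesis using Cons False by (auto simp: alt_chain_Cons)
  qed (use Cons in \<open>auto simp: alt_chain_Cons sqle_refl\<close>)
qed simp

section \<open>Transfer along the substitution of \<open>\<xi>\<close> for \<open>x'\<close>\<close>

text \<open>\<open>abstracts x x' a c\<close>: \<open>a\<close> arises from \<open>c\<close> by replacing some free occurrences of \<open>x\<close>,
  and some fixpoint formulas binding \<open>x\<close>, by \<open>x'\<close>. Unfolding preserves this relation, so every
  formula of \<open>Clos (\<chi>[x'/x])\<close> abstracts one of \<open>Clos \<chi>\<close>; this transfers \<open>\<xi> \<notin> Clos \<chi>\<close>.\<close>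
inductive abstracts :: "nat \<Rightarrow> nat \<Rightarrow> 'p fml \<Rightarrow> 'p fml \<Rightarrow> bool" for x x' where
  Var_x: "abstracts x x' (Var x') (Var x)"
| Var_Fix: "abstracts x x' (Var x') (Fix e x c)"
| Var: "z \<noteq> x' \<Longrightarrow> abstracts x x' (Var z) (Var z)"
| Top: "abstracts x x' Top Top"
| Bot: "abstracts x x' Bot Bot"
| Prop: "abstracts x x' (Prop p) (Prop p)"
| NProp: "abstracts x x' (NProp p) (NProp p)"
| And: "abstracts x x' a c \<Longrightarrow> abstracts x x' b d \<Longrightarrow> abstracts x x' (And a b) (And c d)"
| Or: "abstracts x x' a c \<Longrightarrow> abstracts x x' b d \<Longrightarrow> abstracts x x' (Or a b) (Or c d)"
| Dia: "abstracts x x' a c \<Longrightarrow> abstracts x x' (Dia a) (Dia c)"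
| Box: "abstracts x x' a c \<Longrightarrow> abstracts x x' (Box a) (Box c)"
| Fix: "abstracts x x' a c \<Longrightarrow> abstracts x x' (Fix e z a) (Fix e z c)"

lemma abstracts_subst:
  "abstracts x x' a c \<Longrightarrow> abstracts x x' s t \<Longrightarrow> z \<noteq> x' \<Longrightarrow> (z = x \<longrightarrow> (\<exists>e d. t = Fix e x d)) \<Longrightarrow>
   abstracts x x' (subst a s z) (subst c t z)"
  by (induction rule: abstracts.induct) (auto intro: abstracts.intros)

lemma abstracts_step:
  "abstracts x x' a c \<Longrightarrow> x' \<notin> BV a \<Longrightarrow> step a b \<Longrightarrow> \<exists>d. step c d \<and> abstracts x x' b d"
proof (induction rule: abstracts.induct)
  case (Fix a c e z)
  then have "abstracts x x' (subst a (Fix e z a) z) (subst c (Fix e z c) z)"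
    by (auto intro: abstracts_subst abstracts.intros)
  with Fix.prems show ?case by auto
qed auto

lemma abstracts_refl: "x' \<notin> vars c \<Longrightarrow> abstracts x x' c c"
  by (induction c) (auto simp: vars_def intro: abstracts.intros)

lemma abstracts_rename: "x' \<notin> vars c \<Longrightarrow> abstracts x x' (subst c (Var x') x) c"
  by (induction c) (auto simp: vars_def intro: abstracts.intros abstracts_refl)

lemma abstracts_fresh_eq: "abstracts x x' a c \<Longrightarrow> x' \<notin> vars a \<Longrightarrow> c = a"
  by (induction rule: abstracts.induct) (auto simp: vars_def)

lemma map_preimage: "(\<And>d. d \<in> set ds \<Longrightarrow> \<exists>c. P c \<and> d = f c) \<Longrightarrow> \<exists>cs. ds = map f cs \<and> (\<forall>c \<in> set cs. P c)"
proof (induction ds)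
  case (Cons d ds)
  then obtain cs where "ds = map f cs" "\<forall>c \<in> set cs. P c" by auto
  moreover obtain c where "P c" "d = f c" using Cons.prems by auto
  ultimately show ?case by (intro exI[of _ "c # cs"]) simp
qed simp

locale fresh_unfolding = fresh_renaming e x chi x' for e x and chi :: "'p fml" and x' +
  assumes x_free: "x \<in> FV chi"
    and xi_notin_Clos_chi: "xi \<notin> Clos chi"
begin

lemma xi_notin_Clos: "xi \<notin> Clos chi'"
proof
  have "\<exists>c. step\<^sup>*\<^sup>* chi c \<and> abstracts x x' t c" if "step\<^sup>*\<^sup>* chi' t" for t
    using that
  proof (induction rule: rtranclp_induct)
    case base
    show ?case using abstracts_rename fresh_var by (auto simp: vars_def)
  next
    case (step t u)
    then obtain c where "step\<^sup>*\<^sup>* chi c" "abstracts x x' t c" by blast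
    moreover have "x' \<notin> BV t" using step.hyps(1) Clos_chi'_capture_free
      by (simp add: Clos_def capture_free_def)
    ultimately show ?case using abstracts_step step.hyps(2) rtranclp.rtrancl_into_rtrancl by metis
  qed
  moreover assume "xi \<in> Clos chi'"
  ultimately show False
    using abstracts_fresh_eq fresh xi_notin_Clos_chi by (fastforce simp: Clos_def)
qed

text \<open>On admissible formulas \<open>subst_xi\<close> is injective: \<open>\<xi>\<close> itself can only arise from \<open>x'\<close>.\<close>
definition admissible :: "'p fml \<Rightarrow> bool" where
  "admissible t \<longleftrightarrow> capture_free t \<and> \<not> occ xi t"

lemma Clos_chi'_admissible: "t \<in> Clos chi' \<Longrightarrow> admissible t"
  using Clos_chi'_capture_free xi_notin_Clos occ_Clos Clos_trans unfolding admissible_def by blast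

lemma admissible_simps [simp]:
  "admissible (Var z)" "admissible Top" "admissible Bot"
  "admissible (Prop p)" "admissible (NProp p)"
  "admissible (And a b) \<longleftrightarrow> admissible a \<and> admissible b"
  "admissible (Or a b) \<longleftrightarrow> admissible a \<and> admissible b"
  "admissible (Dia a) \<longleftrightarrow> admissible a"
  "admissible (Box a) \<longleftrightarrow> admissible a"
  "admissible (Fix e2 z a) \<longleftrightarrow> admissible a \<and> Fix e2 z a \<noteq> xi \<and> z \<noteq> x' \<and> z \<notin> FV xi"
  by (auto simp: admissible_def capture_free_def)

lemma subst_xi_eq_chi: "capture_free c \<Longrightarrow> subst_xi c = chi \<Longrightarrow> c = chi"
proof (cases "x' \<in> FV c")
  case True
  assume "capture_free c" "subst_xi c = chi"
  then have "occ xi chi" using occ_subst_self True unfolding capture_free_def by metis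
  then show ?thesis using occ_size by fastforce
qed (simp add: subst_nonfree)

lemma subst_xi_eq_xi: "admissible c \<Longrightarrow> subst_xi c = xi \<Longrightarrow> c = Var x'"
proof (cases c)
  case (Fix e2 z d)
  moreover assume "admissible c" "subst_xi c = xi"
  ultimately have "d = chi" "c = xi"
    using subst_xi_eq_chi by (auto simp: admissible_def capture_free_def split: if_splits)
  with \<open>admissible c\<close> show ?thesis by (simp add: admissible_def)
qed (auto split: if_splits)

lemma subst_xi_inj: "admissible a \<Longrightarrow> admissible c \<Longrightarrow> subst_xi a = subst_xi c \<Longrightarrow> a = c"
proof (induction a arbitrary: c)
  case (Var z)
  show ?case
  proof (cases "z = x'")
    case True
    with Var.prems have "subst_xi c = xi" by simp
    with Var.prems True show ?thesis using subst_xi_eq_xi by blast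
  next
    case False
    with Var.prems have "subst_xi c = Var z" by simp
    with False show ?thesis by (cases c) (auto split: if_splits)
  qed
next
  case (Fix e2 z a)
  have "c \<noteq> Var x'" using Fix.prems subst_xi_eq_xi[of "Fix e2 z a"] by auto
  with Fix.prems obtain d where "c = Fix e2 z d" "subst_xi a = subst_xi d" "admissible d"
    by (cases c) (auto split: if_splits)
  moreover have "admissible a" using Fix.prems(1) by simp
  ultimately show ?case using Fix.IH by blast
next
  case (And a b) then show ?case by (cases c) (auto split: if_splits)
next
  case (Or a b) then show ?case by (cases c) (auto split: if_splits)
next
  case (Dia a) then show ?case by (cases c) (auto split: if_splits)
next
  case (Box a) then show ?case by (cases c) (auto split: if_splits)
next
  case Top then show ?case by (cases c) (auto split: if_splits)
next
  case Bot then show ?case by (cases c) (auto split: if_splits)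
next
  case (Prop p) then show ?case by (cases c) (auto split: if_splits)
next
  case (NProp p) then show ?case by (cases c) (auto split: if_splits)
qed

lemma inj_on_subst_xi: "inj_on subst_xi (Clos chi')"
  using subst_xi_inj Clos_chi'_admissible unfolding inj_on_def by blast

lemma subst_xi_inj_Clos: "a \<in> Clos chi' \<Longrightarrow> c \<in> Clos chi' \<Longrightarrow> subst_xi a = subst_xi c \<Longrightarrow> a = c"
  using inj_on_subst_xi by (simp add: inj_on_def)

lemma Var_x'_Clos: "Var x' \<in> Clos chi'"
proof -
  have "x' \<in> FV chi'" using FV_subst_free[of x chi "Var x'"] x_free fresh_var by auto
  then show ?thesis using occ_Var_FV occ_Clos by blast
qed

lemma bij_betw_subst_xi: "bij_betw subst_xi (Clos chi') (Clos xi)"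
proof -
  have "xi = subst_xi (Var x')" by simp
  then have "subst_xi ` Clos chi' = Clos xi"
    using subst_xi_Clos Clos_xi_subset Var_x'_Clos by blast
  with inj_on_subst_xi show ?thesis by (simp add: bij_betw_def)
qed

lemma step_subst_xi_iff:
  assumes "phi \<in> Clos chi'" "psi \<in> Clos chi'" "phi \<noteq> Var x'"
  shows "step (subst_xi phi) (subst_xi psi) \<longleftrightarrow> step phi psi"
proof
  assume "step (subst_xi phi) (subst_xi psi)"
  then obtain v where v: "step phi v" "subst_xi psi = subst_xi v"
    using step_subst_xi_inv assms Clos_chi'_capture_free by blast
  then have "psi = v" using assms Clos_step_trans subst_xi_inj_Clos by blast
  with v show "step phi psi" by simp
qed (use step_subst_xi Clos_chi'_capture_free assms in blast)

lemma occ_subst_xi: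
  assumes "occ a b" and "capture_free b"
  shows "occ (subst_xi a) (subst_xi b)"
proof -
  obtain n where "occ_at a b n" using assms(1) by (auto simp: occ_def)
  then show ?thesis using assms(2)
  proof (induction rule: occ_at.induct)
    case (fixp a b n w e)
    then have "w \<notin> FV (subst_xi a)" using FV_subst[of a xi x'] by auto
    with fixp show ?case by simp
  qed auto
qed

lemma occ_subst_xi_inv:
  "admissible a \<Longrightarrow> x' \<in> FV a \<Longrightarrow> admissible b \<Longrightarrow> occ (subst_xi a) (subst_xi b) \<Longrightarrow> occ a b"
proof (induction b)
  case (Var z)
  show ?case
  proof (cases "z = x'")
    case True
    have "occ xi (subst_xi a)"
      using occ_subst_self Var.prems(1,2) unfolding admissible_def capture_free_def by blast
    moreover have "occ (subst_xi a) xi" using Var.prems(4) True by (simp del: occ_simps)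
    ultimately have "subst_xi a = xi" using occ_antisym by blast
    then show ?thesis using subst_xi_eq_xi Var.prems(1) True by simp
  next
    case False
    with Var.prems have "subst_xi a = subst_xi (Var z)" by simp
    then show ?thesis using Var.prems subst_xi_inj by (metis occ_refl)
  qed
next
  case (Fix e2 w b)
  then have "w \<noteq> x'" by simp
  with Fix.prems have
    "subst_xi a = subst_xi (Fix e2 w b) \<or> occ (subst_xi a) (subst_xi b) \<and> w \<notin> FV (subst_xi a)"
    by simp
  moreover have "w \<notin> FV a" if "w \<notin> FV (subst_xi a)" using that FV_subst_lower \<open>w \<noteq> x'\<close> by blast
  ultimately show ?case using Fix subst_xi_inj[of a "Fix e2 w b"] by auto
next
  case (And b c) then show ?case using subst_xi_inj[of a "And b c"] by auto
next
  case (Or b c) then show ?case using subst_xi_inj[of a "Or b c"] by auto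
next
  case (Dia b) then show ?case using subst_xi_inj[of a "Dia b"] by auto
next
  case (Box b) then show ?case using subst_xi_inj[of a "Box b"] by auto
next
  case Top then show ?case using subst_xi_inj[of a Top] by auto
next
  case Bot then show ?case using subst_xi_inj[of a Bot] by auto
next
  case (Prop p) then show ?case using subst_xi_inj[of a "Prop p"] by auto
next
  case (NProp p) then show ?case using subst_xi_inj[of a "NProp p"] by auto
qed


lemma fsub_subst_xi_iff:
  assumes "phi \<in> Clos chi'" "psi \<in> Clos chi'" "x' \<in> FV phi"
  shows "fsub (subst_xi phi) (subst_xi psi) \<longleftrightarrow> fsub phi psi"
  using occ_subst_xi occ_subst_xi_inv Clos_chi'_admissible assms
    unfolding fsub_iff_occ admissible_def by blast

lemma subst_xi_Clos_fresh: "t \<in> Clos phi \<Longrightarrow> x' \<notin> FV phi \<Longrightarrow> subst_xi t = t"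
  using Clos_FV subst_nonfree by blast

lemma step_within_subst_xi:
  assumes phi: "phi \<in> Clos chi'" "x' \<in> FV phi"
  shows "(step_within phi)\<^sup>*\<^sup>* phi t \<Longrightarrow> (step_within (subst_xi phi))\<^sup>*\<^sup>* (subst_xi phi) (subst_xi t)"
proof (induction rule: rtranclp_induct)
  case (step t u)
  have t: "t \<in> Clos chi'" using step_within_Clos[OF step(1)] phi(1) Clos_trans by blast
  then have "u \<in> Clos chi'" using step(2) Clos_step_trans by blast
  then have "fsub (subst_xi phi) (subst_xi u)" using fsub_subst_xi_iff phi step(2) by blast
  moreover have "step (subst_xi t) (subst_xi u)"
    using step_subst_xi Clos_chi'_capture_free t step(2) by blast
  ultimately show ?case using step.IH by (simp add: rtranclp.rtrancl_into_rtrancl)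
qed simp

lemma step_within_subst_xi_inv:
  assumes phi: "phi \<in> Clos chi'" "is_fix phi" "x' \<in> FV phi"
  shows "(step_within (subst_xi phi))\<^sup>*\<^sup>* (subst_xi phi) u \<Longrightarrow>
    \<exists>t. u = subst_xi t \<and> (step_within phi)\<^sup>*\<^sup>* phi t"
proof (induction rule: rtranclp_induct)
  case (step u w)
  then obtain t where t: "u = subst_xi t" "(step_within phi)\<^sup>*\<^sup>* phi t" by blast
  have tC: "t \<in> Clos chi'" using step_within_Clos[OF t(2)] phi(1) Clos_trans by blast
  have "t \<noteq> Var x'" using step_within_last[OF t(2)] phi(2) by auto
  then obtain v where v: "step t v" "w = subst_xi v"
    using step_subst_xi_inv Clos_chi'_capture_free tC step(2) t(1) by blast
  have "v \<in> Clos chi'" using tC v(1) Clos_step_trans by blast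
  then have "fsub phi v" using fsub_subst_xi_iff phi step(2) v(2) by blast
  then have "(step_within phi)\<^sup>*\<^sup>* phi v"
    using v(1) t(2) by (simp add: rtranclp.rtrancl_into_rtrancl)
  with v(2) show ?case by blast
qed blast

lemma sqle_subst_xi:
  assumes "phi \<in> Clos chi'" and "sqle psi phi"
  shows "sqle (subst_xi psi) (subst_xi phi)"
proof (cases "x' \<in> FV phi")
  case True
  have "phi \<noteq> Var x'" "psi \<noteq> Var x'" using assms(2) unfolding sqle_def by auto
  then show ?thesis
    using assms step_within_subst_xi[OF assms(1) True] unfolding sqle_iff_step_within
    by (simp add: subst_non_Var)
next
  case False
  then show ?thesis using assms sqle_Clos subst_xi_Clos_fresh Clos_refl by metis
qed

lemma sqle_subst_xi_inv:
  assumes "phi \<in> Clos chi'" "is_fix phi" "sqle c (subst_xi phi)"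
  shows "\<exists>psi \<in> Clos chi'. c = subst_xi psi \<and> sqle psi phi"
proof (cases "x' \<in> FV phi")
  case True
  obtain psi where psi: "c = subst_xi psi" "(step_within phi)\<^sup>*\<^sup>* phi psi"
    using step_within_subst_xi_inv[OF assms(1,2) True] assms(3)
      unfolding sqle_iff_step_within by blast
  have "psi \<noteq> Var x'" using step_within_last[OF psi(2)] assms(2) by auto
  then have "is_fix psi" using assms(3) psi(1) subst_non_Var(2) unfolding sqle_def by blast
  moreover have "psi \<in> Clos chi'" using step_within_Clos[OF psi(2)] assms(1) Clos_trans by blast
  ultimately show ?thesis using psi assms(2) unfolding sqle_iff_step_within by blast
next
  case False
  then have "subst_xi phi = phi" by (simp add: subst_nonfree)
  then have "c \<in> Clos phi" using assms(3) sqle_Clos by simp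
  then have "subst_xi c = c" "c \<in> Clos chi'"
    using False subst_xi_Clos_fresh Clos_trans assms(1) by blast+
  then show ?thesis using assms(3) \<open>subst_xi phi = phi\<close> by metis
qed

lemma sqle_subst_xi_iff:
  assumes "phi \<in> Clos chi'" "is_fix phi" "psi \<in> Clos chi'"
  shows "sqle (subst_xi psi) (subst_xi phi) \<longleftrightarrow> sqle psi phi"
  using sqle_subst_xi sqle_subst_xi_inv subst_xi_inj_Clos assms by metis

lemma alt_chain_map_subst_xi:
  "set cs \<subseteq> Clos chi' \<Longrightarrow> \<forall>c \<in> set cs. is_fix c \<Longrightarrow> alt_chain (map subst_xi cs) \<longleftrightarrow> alt_chain cs"
proof (induction cs)
  case (Cons c cs)
  then have c: "c \<in> Clos chi'" "is_fix c" and IH: "alt_chain (map subst_xi cs) \<longleftrightarrow> alt_chain cs"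
    by auto
  have "tidy (subst_xi c)" "tidy c" using tidy_Clos tidy_xi tidy_chi' subst_xi_Clos c(1) by blast+
  moreover have "is_fix (subst_xi c)" "fix_type (subst_xi c) = fix_type c"
    using c(2) by (cases c; simp)+
  moreover have "sqlt (subst_xi c) (subst_xi (hd cs)) \<longleftrightarrow> sqlt c (hd cs)"
    and "fix_type (subst_xi (hd cs)) = fix_type (hd cs)" if "cs \<noteq> []"
  proof -
    have h: "hd cs \<in> Clos chi'" "is_fix (hd cs)" using that Cons.prems by auto
    show "sqlt (subst_xi c) (subst_xi (hd cs)) \<longleftrightarrow> sqlt c (hd cs)"
      using sqle_subst_xi_iff[OF h c(1)] sqle_subst_xi_iff[OF c h(1)] unfolding sqlt_def by blast
    show "fix_type (subst_xi (hd cs)) = fix_type (hd cs)" using h(2) subst_non_Var(3) by blast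
  qed
  ultimately show ?case using IH c(2) by (auto simp: alt_chain_Cons hd_map)
qed simp

lemma alt_chain_preimage:
  assumes "phi \<in> Clos chi'" "is_fix phi" "alt_chain ds" "ds \<noteq> []" "last ds = subst_xi phi"
  obtains cs where "ds = map subst_xi cs" "alt_chain cs" "cs \<noteq> []" "last cs = phi"
proof -
  have "\<exists>psi. (psi \<in> Clos chi' \<and> is_fix psi) \<and> d = subst_xi psi" if "d \<in> set ds" for d
  proof -
    have "sqle d (subst_xi phi)" using alt_chain_sqle_last[OF assms(3) that] assms(5) by simp
    then obtain psi where "psi \<in> Clos chi'" "d = subst_xi psi" "sqle psi phi"
      using sqle_subst_xi_inv[OF assms(1,2)] by blast
    then show ?thesis unfolding sqle_def by blast
  qed
  then obtain cs where cs: "ds = map subst_xi cs" "\<forall>c \<in> set cs. c \<in> Clos chi' \<and> is_fix c"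
    using map_preimage[of ds "\<lambda>c. c \<in> Clos chi' \<and> is_fix c" subst_xi] by blast
  moreover have "cs \<noteq> []" using cs(1) assms(4) by simp
  moreover have "subst_xi (last cs) = subst_xi phi"
    using cs(1) assms(5) \<open>cs \<noteq> []\<close> by (simp add: last_map)
  then have "last cs = phi" using cs(2) \<open>cs \<noteq> []\<close> assms(1) subst_xi_inj_Clos by simp
  ultimately show ?thesis using that alt_chain_map_subst_xi assms(3) by auto
qed

lemma alt_chains_to_subst_xi:
  assumes "phi \<in> Clos chi'" "is_fix phi"
  shows "{cs. alt_chain cs \<and> cs \<noteq> [] \<and> last cs = subst_xi phi} =
    map subst_xi ` {cs. alt_chain cs \<and> cs \<noteq> [] \<and> last cs = phi}"
proof (intro equalityI subsetI)
  fix ds assume "ds \<in> {cs. alt_chain cs \<and> cs \<noteq> [] \<and> last cs = subst_xi phi}"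
  then show "ds \<in> map subst_xi ` {cs. alt_chain cs \<and> cs \<noteq> [] \<and> last cs = phi}"
    using alt_chain_preimage[OF assms] by blast
next
  fix ds assume "ds \<in> map subst_xi ` {cs. alt_chain cs \<and> cs \<noteq> [] \<and> last cs = phi}"
  then obtain cs where cs: "ds = map subst_xi cs" "alt_chain cs" "cs \<noteq> []" "last cs = phi" by blast
  then have "set cs \<subseteq> Clos chi'" "\<forall>c \<in> set cs. is_fix c"
    using alt_chain_sqle_last sqle_Clos assms(1) Clos_trans unfolding sqle_def by blast+
  with cs show "ds \<in> {cs. alt_chain cs \<and> cs \<noteq> [] \<and> last cs = subst_xi phi}"
    using alt_chain_map_subst_xi by (auto simp: last_map)
qed

lemma h_down_subst_xi:
  assumes "phi \<in> Clos chi'" "is_fix phi"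
  shows "h_down (subst_xi phi) = h_down phi"
proof -
  have "{length cs | cs. Q cs} = length ` {cs. Q cs}" for Q :: "'p fml list \<Rightarrow> bool" by blast
  then show ?thesis
    using assms unfolding h_down_def by (simp add: alt_chains_to_subst_xi image_image)
qed

end

section \<open>Priorities and the winner of a trace\<close>

lemma chain_lengths_from_finite: "finite {length cs | cs. alt_chain cs \<and> cs \<noteq> [] \<and> hd cs = a}"
proof (rule finite_subset)
  show "{length cs | cs. alt_chain cs \<and> cs \<noteq> [] \<and> hd cs = a} \<subseteq> {..card {c. occ c a}}"
  proof
    fix n assume "n \<in> {length cs | cs. alt_chain cs \<and> cs \<noteq> [] \<and> hd cs = a}"
    then obtain cs where cs: "n = length cs" "alt_chain cs" "hd cs = a" by blast
    then have "set cs \<subseteq> {c. occ c a}" using alt_chain_hd_sqle sqle_occ by blast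
    then have "card (set cs) \<le> card {c. occ c a}" using finite_occ card_mono by blast
    with cs show "n \<in> {..card {c. occ c a}}" using alt_chain_distinct distinct_card by fastforce
  qed
qed simp

lemma h_up_ge: "alt_chain cs \<Longrightarrow> cs \<noteq> [] \<Longrightarrow> length cs \<le> h_up (hd cs)"
  unfolding h_up_def by (rule Max_ge[OF chain_lengths_from_finite]) blast

lemma h_up_witness:
  assumes "tidy a" "is_fix a"
  obtains cs where "alt_chain cs" "cs \<noteq> []" "hd cs = a" "length cs = h_up a"
proof -
  let ?L = "{length cs | cs. alt_chain cs \<and> cs \<noteq> [] \<and> hd cs = a}"
  have "alt_chain [a]" using assms by (simp add: alt_chain_Cons)
  then have "length [a] \<in> ?L" by (intro CollectI exI[of _ "[a]"]) simp
  then have "Max ?L \<in> ?L" by (intro Max_in[OF chain_lengths_from_finite]) blast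
  then obtain cs where "Max ?L = length cs" "alt_chain cs" "cs \<noteq> []" "hd cs = a" by blast
  then show ?thesis using that[of cs] unfolding h_up_def by simp
qed

lemma h_up_sqlt:
  assumes "sqlt b a" "tidy a" "tidy b" "is_fix a"
  shows "h_up a \<le> h_up b \<and> (fix_type b \<noteq> fix_type a \<longrightarrow> h_up a < h_up b)"
proof -
  obtain cs where cs: "alt_chain (a # cs)" "Suc (length cs) = h_up a"
    using h_up_witness[OF assms(2,4)] by (metis length_Cons list.collapse)
  have "is_fix b" using assms(1) by (simp add: sqlt_def sqle_def)
  show ?thesis
  proof (cases "fix_type b = fix_type a")
    case True
    then have "alt_chain (b # cs)"
      using cs(1) assms \<open>is_fix b\<close> sqlt_trans by (auto simp: alt_chain_Cons)
    then show ?thesis using h_up_ge[of "b # cs"] cs(2) True by simp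
  next
    case False
    then have "fix_type a = dual (fix_type b)" by (cases "fix_type a"; cases "fix_type b") auto
    then have "alt_chain (b # a # cs)" using cs(1) assms \<open>is_fix b\<close> by (simp add: alt_chain_Cons)
    then show ?thesis using h_up_ge[of "b # a # cs"] cs(2) by simp
  qed
qed

lemma Omega_g_parity: "even (Omega_g a) \<longleftrightarrow> fix_type a = Nu"
  by (cases "fix_type a") (auto simp: Omega_g_def Let_def)

lemma Omega_g_bounds:
  "int (cd (cluster a)) - int (h_up a) \<le> Omega_g a"
  "Omega_g a \<le> int (cd (cluster a)) - int (h_up a) + 1"
  by (auto simp: Omega_g_def Let_def)

lemma Omega_g_mono:
  assumes "sqle b a" "cluster b = cluster a" "tidy a" "tidy b" "is_fix a"
  shows "Omega_g b \<le> Omega_g a"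
proof (cases "b = a \<or> fix_type b = fix_type a \<and> h_up b = h_up a")
  case True
  then show ?thesis using assms(2) by (auto simp: Omega_g_def)
next
  case False
  then have "sqlt b a" using assms(1) sqle_antisym unfolding sqlt_def by blast
  then have "h_up a < h_up b" using h_up_sqlt assms(3-5) False by fastforce
  then show ?thesis using Omega_g_bounds[of a] Omega_g_bounds[of b, unfolded assms(2)] by linarith
qed

lemma cluster_eq: "step\<^sup>*\<^sup>* a b \<Longrightarrow> step\<^sup>*\<^sup>* b a \<Longrightarrow> cluster a = cluster b"
  unfolding cluster_def clos_eq_def by (meson rtranclp_trans)

lemma rtranclp_path:
  "n \<le> m \<Longrightarrow> (\<And>k. n \<le> k \<Longrightarrow> k < m \<Longrightarrow> R (f k) (f (Suc k))) \<Longrightarrow> R\<^sup>*\<^sup>* (f n) (f m)"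
  by (induction m rule: dec_induct) (auto intro: rtranclp.rtrancl_into_rtrancl)

lemma inf_trace_steps: "inf_trace f \<Longrightarrow> n \<le> m \<Longrightarrow> step\<^sup>*\<^sup>* (f n) (f m)"
  unfolding inf_trace_def by (rule rtranclp_path) auto

lemma inf_trace_frequently_fix:
  assumes "inf_trace f"
  shows "\<exists>\<^sub>\<infinity>n. is_fix (f n)"
proof (rule ccontr)
  assume "\<not> (\<exists>\<^sub>\<infinity>n. is_fix (f n))"
  then obtain N where N: "\<forall>n\<ge>N. \<not> is_fix (f n)" by (auto simp: MOST_nat_le)
  have "size (f (N + k)) + k \<le> size (f N)" for k
  proof (induction k)
    case (Suc k)
    have "step (f (N + k)) (f (N + Suc k))" using assms by (simp add: inf_trace_def)
    moreover have "\<not> is_fix (f (N + k))" using N by simp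
    ultimately have "size (f (N + Suc k)) < size (f (N + k))" by (cases "f (N + k)") auto
    with Suc show ?case by simp
  qed simp
  from this[of "Suc (size (f N))"] show False by simp
qed

lemma eventually_recurrent:
  assumes "finite S" "\<forall>n. f n \<in> S"
  shows "\<forall>\<^sub>\<infinity>n. \<exists>\<^sub>\<infinity>m. f m = f n"
proof -
  have "\<forall>a \<in> S. \<forall>\<^sub>\<infinity>n. f n = a \<longrightarrow> (\<exists>\<^sub>\<infinity>m. f m = a)"
    by (auto simp: not_frequently[symmetric] elim: eventually_mono)
  then have "\<forall>\<^sub>\<infinity>n. \<forall>a \<in> S. f n = a \<longrightarrow> (\<exists>\<^sub>\<infinity>m. f m = a)"
    by (subst eventually_ball_finite_distrib[OF assms(1)])
  then show ?thesis by (rule eventually_mono) (use assms(2) in blast)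
qed

lemma occ_step_cases:
  assumes "tidy r" "t \<in> Clos r" "a \<in> Clos r" "step t u" "occ a u"
  shows "occ a t \<or> is_fix t \<and> occ t a"
proof (cases t)
  case (Fix e z d)
  have "BV d \<inter> FV t = {}" using tidy_Clos[OF assms(1,2)] Fix by (auto simp: tidy_def)
  moreover have "u = subst d t z" using assms(4) Fix by simp
  ultimately have "occ a t \<or> occ a d \<or> occ t a" using occ_subst_cases assms(5) by blast
  moreover have "z \<notin> FV a"
    using Clos_BV[OF assms(2)] Clos_FV[OF assms(3)] assms(1) Fix by (auto simp: tidy_def)
  ultimately show ?thesis using Fix by auto
qed (use assms(4,5) in auto)

definition recurrent_fix :: "(nat \<Rightarrow> 'p fml) \<Rightarrow> 'p fml set" where
  "recurrent_fix f = {a. is_fix a \<and> (\<exists>\<^sub>\<infinity>n. f n = a)}"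

lemma recurrent_fix_occurs: "a \<in> recurrent_fix f \<Longrightarrow> \<exists>m \<ge> n. f m = a"
  by (auto simp: recurrent_fix_def INFM_nat_le)

lemma recurrent_fix_cluster:
  assumes "inf_trace f" "a \<in> recurrent_fix f" "b \<in> recurrent_fix f"
  shows "cluster a = cluster b"
proof -
  obtain n m k where "n \<le> m" "m \<le> k" "f n = a" "f m = b" "f k = a"
    using recurrent_fix_occurs assms(2,3) by meson
  then show ?thesis using inf_trace_steps[OF assms(1)] cluster_eq by metis
qed

text \<open>Only unfolding a fixpoint formula in which \<open>a\<close> occurs can remove the free occurrence
  of \<open>a\<close>; from the point on where all visited formulas recur, that fixpoint formula is
  recurrent and smaller than \<open>a\<close>, contradicting minimality.\<close>
lemma smallest_recurrent_fix_persists: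
  assumes r: "tidy r" and f: "inf_trace f" "\<forall>n. f n \<in> Clos r"
    and a: "a \<in> recurrent_fix f" and a_min: "\<And>b. b \<in> recurrent_fix f \<Longrightarrow> size a \<le> size b"
  obtains N where "\<And>n. N \<le> n \<Longrightarrow> occ a (f n)"
proof -
  obtain N where N: "\<And>n. N \<le> n \<Longrightarrow> \<exists>\<^sub>\<infinity>m. f m = f n"
    using eventually_recurrent[OF finite_Clos[OF r] f(2)] by (auto simp: MOST_nat_le)
  have "a \<in> Clos r" using recurrent_fix_occurs[OF a] f(2) by metis
  have "occ a (f n)" if "N \<le> n" for n
  proof -
    obtain m where "n \<le> m" "f m = a" using recurrent_fix_occurs[OF a] by blast
    from \<open>n \<le> m\<close> show ?thesis
    proof (induction rule: inc_induct)
      case base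
      show ?case using \<open>f m = a\<close> by simp
    next
      case (step k)
      have "step (f k) (f (Suc k))" using f(1) by (simp add: inf_trace_def)
      then have "occ a (f k) \<or> is_fix (f k) \<and> occ (f k) a"
        using occ_step_cases r f(2) \<open>a \<in> Clos r\<close> step.IH by blast
      moreover have "f k = a" if "is_fix (f k)" "occ (f k) a"
      proof -
        have "f k \<in> recurrent_fix f"
          using N[of k] that(1) step.hyps(1) \<open>N \<le> n\<close> unfolding recurrent_fix_def by simp
        then show ?thesis using a_min occ_size occ_size_eq that(2) le_antisym by metis
      qed
      ultimately show ?case by auto
    qed
  qed
  with that show ?thesis by blast
qed

lemma greatest_recurrent_fix:
  assumes r: "tidy r" and f: "inf_trace f" "\<forall>n. f n \<in> Clos r"
  obtains a where "a \<in> recurrent_fix f" "\<forall>b \<in> recurrent_fix f. sqle b a"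
proof -
  have "\<exists>\<^sub>\<infinity>n. \<exists>a \<in> Clos r. f n = a \<and> is_fix a"
    using inf_trace_frequently_fix[OF f(1)] f(2) by (auto elim: frequently_elim1)
  then obtain a0 where "a0 \<in> recurrent_fix f"
    unfolding frequently_bex_finite_distrib[OF finite_Clos[OF r]] recurrent_fix_def
    by (auto dest: frequently_ex elim: frequently_elim1)
  then obtain a where a: "a \<in> recurrent_fix f"
    and "\<And>b. b \<in> recurrent_fix f \<Longrightarrow> size a \<le> size b"
    using ex_has_least_nat[of "\<lambda>b. b \<in> recurrent_fix f" a0 size] by blast
  then obtain N where a_occ: "\<And>n. N \<le> n \<Longrightarrow> occ a (f n)"
    using smallest_recurrent_fix_persists[OF r f] by blast
  obtain n0 where n0: "N \<le> n0" "f n0 = a" using recurrent_fix_occurs[OF a] by blast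
  have "sqle b a" if b: "b \<in> recurrent_fix f" for b
  proof -
    obtain m where "n0 \<le> m" "f m = b" using recurrent_fix_occurs[OF b] by blast
    then have "(step_within a)\<^sup>*\<^sup>* a b"
      using rtranclp_path[of n0 m "step_within a" f] f(1) a_occ n0
      by (auto simp: inf_trace_def fsub_iff_occ)
    then show "sqle b a" using a b unfolding sqle_iff_step_within recurrent_fix_def by blast
  qed
  with a that show ?thesis by blast
qed

lemma winner_greatest_recurrent:
  assumes r: "tidy r" and f: "inf_trace f" "\<forall>n. f n \<in> Clos r"
    and a: "a \<in> recurrent_fix f" "\<forall>b \<in> recurrent_fix f. sqle b a"
  shows "winner f = (if fix_type a = Nu then Eloise else Abelard)"
proof -
  have sub: "recurrent_fix f \<subseteq> Clos r" using f(2) recurrent_fix_occurs by blast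
  then have "finite (recurrent_fix f)" using finite_Clos r finite_subset by blast
  moreover have "Omega_g b \<le> Omega_g a" if "b \<in> recurrent_fix f" for b
    using Omega_g_mono a that recurrent_fix_cluster[OF f(1)] tidy_Clos[OF r] sub
    unfolding recurrent_fix_def by blast
  ultimately have "Max (Omega_g ` recurrent_fix f) = Omega_g a" using a(1) by (intro Max_eqI) auto
  then show ?thesis
    using Omega_g_parity[of a] unfolding winner_def recurrent_fix_def[symmetric] by auto
qed

context fresh_unfolding
begin

lemma inf_trace_subst_xi: "inf_trace f \<Longrightarrow> \<forall>n. f n \<in> Clos chi' \<Longrightarrow> inf_trace (\<lambda>n. subst_xi (f n))"
  using step_subst_xi Clos_chi'_capture_free unfolding inf_trace_def by blast

lemma recurrent_fix_subst_xi:
  assumes "inf_trace f" "\<forall>n. f n \<in> Clos chi'"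
  shows "recurrent_fix (\<lambda>n. subst_xi (f n)) = subst_xi ` recurrent_fix f"
proof (intro equalityI subsetI)
  fix b assume b: "b \<in> recurrent_fix (\<lambda>n. subst_xi (f n))"
  then obtain n where n: "subst_xi (f n) = b" using recurrent_fix_occurs by blast
  have "f n \<noteq> Var x'" using assms(1) unfolding inf_trace_def by (metis step_simps(5))
  then have "is_fix (f n)" using b n subst_non_Var(2) unfolding recurrent_fix_def by blast
  moreover have "\<exists>\<^sub>\<infinity>m. f m = f n"
    using b n subst_xi_inj_Clos assms(2)
      unfolding recurrent_fix_def by (auto elim: frequently_elim1)
  ultimately show "b \<in> subst_xi ` recurrent_fix f" using n unfolding recurrent_fix_def by blast
next
  fix b assume "b \<in> subst_xi ` recurrent_fix f"
  then obtain a where a: "a \<in> recurrent_fix f" "b = subst_xi a" by blast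
  then have "is_fix (subst_xi a)" by (cases a) (auto simp: recurrent_fix_def)
  with a show "b \<in> recurrent_fix (\<lambda>n. subst_xi (f n))"
    unfolding recurrent_fix_def by (auto elim: frequently_elim1)
qed

lemma winner_subst_xi:
  assumes "inf_trace f" "\<forall>n. f n \<in> Clos chi'"
  shows "winner (\<lambda>n. subst_xi (f n)) = winner f"
proof -
  obtain a where a: "a \<in> recurrent_fix f" "\<forall>b \<in> recurrent_fix f. sqle b a"
    using greatest_recurrent_fix[OF tidy_chi' assms] by blast
  have "a \<in> Clos chi'" using recurrent_fix_occurs[OF a(1)] assms(2) by metis
  then have "\<forall>b \<in> recurrent_fix (\<lambda>n. subst_xi (f n)). sqle b (subst_xi a)"
    using a(2) sqle_subst_xi recurrent_fix_subst_xi[OF assms] by auto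
  moreover have "subst_xi a \<in> recurrent_fix (\<lambda>n. subst_xi (f n))"
    using recurrent_fix_subst_xi[OF assms] a(1) by blast
  moreover have "\<forall>n. subst_xi (f n) \<in> Clos xi" using subst_xi_Clos assms(2) by blast
  ultimately have
    "winner (\<lambda>n. subst_xi (f n)) = (if fix_type (subst_xi a) = Nu then Eloise else Abelard)"
    using winner_greatest_recurrent[OF tidy_xi inf_trace_subst_xi[OF assms]] by blast
  moreover have "fix_type (subst_xi a) = fix_type a"
    using a(1) subst_non_Var(3) unfolding recurrent_fix_def by blast
  ultimately show ?thesis using winner_greatest_recurrent[OF tidy_chi' assms a] by simp
qed

end

theorem mainTheorem8:
  fixes e :: fp and x x' :: nat and chi :: "'p fml"
  assumes tidy_xi: "tidy (Fix e x chi)"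
    and x_free: "x \<in> FV chi"
    and not_clos: "Fix e x chi \<notin> Clos chi"
    and fresh: "x' \<notin> vars (Fix e x chi)"
  shows "tidy (subst chi (Var x') x)
    \<and> bij_betw (\<lambda>phi. subst phi (Fix e x chi) x') (Clos (subst chi (Var x') x)) (Clos (Fix e x chi))
    \<and> (\<forall>phi \<in> Clos (subst chi (Var x') x). \<forall>psi \<in> Clos (subst chi (Var x') x).
         (phi \<noteq> Var x' \<longrightarrow>
            (step phi psi \<longleftrightarrow> step (subst phi (Fix e x chi) x') (subst psi (Fix e x chi) x'))
            \<and> Ln phi = Ln (subst phi (Fix e x chi) x'))
       \<and> (x' \<in> FV phi \<longrightarrow>
            (fsub phi psi \<longleftrightarrow> fsub (subst phi (Fix e x chi) x') (subst psi (Fix e x chi) x')))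
       \<and> (is_fix phi \<and> is_fix psi \<longrightarrow>
            (sqle psi phi \<longleftrightarrow> sqle (subst psi (Fix e x chi) x') (subst phi (Fix e x chi) x')))
       \<and> (is_fix phi \<longrightarrow> h_down phi = h_down (subst phi (Fix e x chi) x')))
    \<and> (\<forall>f. inf_trace f \<and> (\<forall>n. f n \<in> Clos (subst chi (Var x') x)) \<longrightarrow>
         winner f = winner (\<lambda>n. subst (f n) (Fix e x chi) x'))"
proof -
  interpret U: fresh_unfolding e x chi x'
    using tidy_xi x_free not_clos fresh by unfold_locales
  show ?thesis
    using U.tidy_chi' U.bij_betw_subst_xi U.step_subst_xi_iff U.fsub_subst_xi_iff
      U.sqle_subst_xi_iff U.h_down_subst_xi U.winner_subst_xi
    by (simp add: subst_non_Var)
qed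
end
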